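(* Let $f_1,\dots,f_m:\mathbb R^n\to\mathbb R$ be continuously differentiable with $\nabla f_j$ being $L_j$-Lipschitz, and set $L=\max_j L_j$. Let $\tau>0$, $x,y\in\mathbb R^n$, and let $$\lambda_\tau(x,y)\in\operatorname*{argmin}_{\lambda\in\Delta_m}\Big\{\langle\lambda,F(x)-F(y)\rangle+\frac{\tau}{2}\|DF(y)\lambda\|^2\Big\}$$ be any minimizer. Then $$\Big\|DF(y)\lambda_\tau(x,y)-\mathrm{proj}_{C(y)}\Big(\frac{y-x}{\tau}\Big)\Big\|\le\sqrt{\frac{2L}{\tau}}\,\|x-y\|.$$
   Context: $F=(f_1,\dots,f_m)^\top$. $\Delta_m=\{\lambda\in\mathbb R^m_{\ge0}:\sum_j\lambda_j=1\}$ is the unit simplex. $DF(y)=[\nabla f_1(y),\dots,\nabla f_m(y)]\in\mathbb R^{n\times m}$, so $DF(y)\lambda=\sum_j\lambda_j\nabla f_j(y)$. $C(y)=\mathrm{conv}\{\nabla f_1(y),\dots,\nabla f_m(y)\}$, and $\mathrm{proj}_C(v)$ is the Euclidean projection of $v$ onto the closed convex set $C$. *)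

theory Defs
  imports "HOL-Analysis.Analysis"
begin

definition unit_simplex :: "nat \<Rightarrow> (nat \<Rightarrow> real) set" where
  "unit_simplex m = {lam. (\<forall>j<m. 0 \<le> lam j) \<and> (\<Sum>j<m. lam j) = 1}"

definition DF_mult :: "nat \<Rightarrow> (nat \<Rightarrow> 'a \<Rightarrow> 'a::real_vector) \<Rightarrow> 'a \<Rightarrow> (nat \<Rightarrow> real) \<Rightarrow> 'a" where
  "DF_mult m g y lam = (\<Sum>j<m. lam j *\<^sub>R g j y)"

definition grad_hull :: "nat \<Rightarrow> (nat \<Rightarrow> 'a \<Rightarrow> 'a::real_vector) \<Rightarrow> 'a \<Rightarrow> 'a set" where
  "grad_hull m g y = convex hull ((\<lambda>j. g j y) ` {..<m})"

definition subobj :: "nat \<Rightarrow> (nat \<Rightarrow> 'a \<Rightarrow> real) \<Rightarrow> (nat \<Rightarrow> 'a \<Rightarrow> 'a::real_inner) \<Rightarrow> real \<Rightarrow> 'a \<Rightarrow> 'a \<Rightarrow> (nat \<Rightarrow> real) \<Rightarrow> real" where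
  "subobj m f g tau x y lam = (\<Sum>j<m. lam j * (f j x - f j y)) + tau / 2 * (norm (DF_mult m g y lam))\<^sup>2"

end

theory Submission
  imports Defs
begin

text \<open>Completing the square turns the subproblem objective into
  \<open>\<tau>/2 \<parallel>DF(y)\<lambda> - (y - x)/\<tau>\<parallel>\<^sup>2\<close> plus a constant plus the \<open>\<lambda>\<close>-average of the first-order
  Taylor residuals \<open>f\<^sub>j(x) - f\<^sub>j(y) - \<langle>\<nabla>f\<^sub>j(y), x - y\<rangle>\<close>, each of modulus at most
  \<open>L/2 \<parallel>x - y\<parallel>\<^sup>2\<close> by the descent lemma. Since \<open>DF(y)\<close> maps the simplex onto \<open>C(y)\<close>, the
  projection \<open>p\<close> of \<open>(y - x)/\<tau>\<close> is attained by some \<open>\<mu>\<close>, and comparing the objective at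
  the minimizer \<open>\<lambda>\<close> with its value at \<open>\<mu>\<close> shows that \<open>DF(y)\<lambda>\<close> is within \<open>L\<parallel>x - y\<parallel>\<^sup>2\<close>
  of optimal for the squared distance. The obtuse angle at the projection then bounds
  \<open>\<tau>/2 \<parallel>DF(y)\<lambda> - p\<parallel>\<^sup>2\<close> by the same quantity.\<close>

lemma DERIV_linear_bound_imp_abs_diff_le:
  fixes h h' :: "real \<Rightarrow> real"
  assumes deriv: "\<And>t. 0 \<le> t \<Longrightarrow> t \<le> 1 \<Longrightarrow> (h has_real_derivative h' t) (at t)"
    and bound: "\<And>t. 0 \<le> t \<Longrightarrow> t \<le> 1 \<Longrightarrow> \<bar>h' t\<bar> \<le> c * t"
  shows "\<bar>h 1 - h 0\<bar> \<le> c / 2"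
proof -
  have "h 1 - c / 2 * 1\<^sup>2 \<le> h 0 - c / 2 * 0\<^sup>2"
  proof (rule DERIV_nonpos_imp_nonincreasing[of 0 1 "\<lambda>t. h t - c / 2 * t\<^sup>2"])
    fix t :: real assume t: "0 \<le> t" "t \<le> 1"
    show "\<exists>D. ((\<lambda>t. h t - c / 2 * t\<^sup>2) has_real_derivative D) (at t) \<and> D \<le> 0"
      using deriv[OF t] bound[OF t]
      by (intro exI[of _ "h' t - c * t"] conjI) (auto intro!: derivative_eq_intros)
  qed simp
  moreover have "h 0 + c / 2 * 0\<^sup>2 \<le> h 1 + c / 2 * 1\<^sup>2"
  proof (rule DERIV_nonneg_imp_nondecreasing[of 0 1 "\<lambda>t. h t + c / 2 * t\<^sup>2"])
    fix t :: real assume t: "0 \<le> t" "t \<le> 1"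
    show "\<exists>D. ((\<lambda>t. h t + c / 2 * t\<^sup>2) has_real_derivative D) (at t) \<and> 0 \<le> D"
      using deriv[OF t] bound[OF t]
      by (intro exI[of _ "h' t + c * t"] conjI) (auto intro!: derivative_eq_intros)
  qed simp
  ultimately show ?thesis unfolding abs_le_iff by simp
qed

lemma lipschitz_gradient_taylor_bound:
  fixes f :: "'a::real_inner \<Rightarrow> real" and g :: "'a \<Rightarrow> 'a"
  assumes deriv: "\<And>z. (f has_derivative (\<lambda>h. g z \<bullet> h)) (at z)"
    and lip: "L-lipschitz_on UNIV g"
  shows "\<bar>f x - f y - g y \<bullet> (x - y)\<bar> \<le> L / 2 * (norm (x - y))\<^sup>2"
proof -
  define d where "d = x - y"
  have path_deriv: "((\<lambda>t. f (y + t *\<^sub>R d) - t * (g y \<bullet> d))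
      has_real_derivative (g (y + t *\<^sub>R d) - g y) \<bullet> d) (at t)" for t
  proof -
    have "((\<lambda>t. y + t *\<^sub>R d) has_derivative (\<lambda>s. s *\<^sub>R d)) (at t)"
      by (auto intro!: derivative_eq_intros)
    from has_derivative_compose[OF this deriv]
    have "((\<lambda>t. f (y + t *\<^sub>R d)) has_derivative (\<lambda>s. g (y + t *\<^sub>R d) \<bullet> (s *\<^sub>R d))) (at t)"
      by (simp add: o_def)
    then have "((\<lambda>t. f (y + t *\<^sub>R d)) has_real_derivative g (y + t *\<^sub>R d) \<bullet> d) (at t)"
      by (simp add: has_field_derivative_def mult_commute_abs)
    then show ?thesis
      by (auto intro!: derivative_eq_intros simp: inner_diff_left)
  qed
  have "\<bar>(g (y + t *\<^sub>R d) - g y) \<bullet> d\<bar> \<le> L * (norm d)\<^sup>2 * t" if "0 \<le> t" for t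
  proof -
    have "\<bar>(g (y + t *\<^sub>R d) - g y) \<bullet> d\<bar> \<le> norm (g (y + t *\<^sub>R d) - g y) * norm d"
      by (rule Cauchy_Schwarz_ineq2)
    also have "\<dots> \<le> L * norm (t *\<^sub>R d) * norm d"
      using lipschitz_onD[OF lip, of "y + t *\<^sub>R d" y] by (simp add: dist_norm mult_right_mono)
    finally show ?thesis using that by (simp add: power2_eq_square mult_ac)
  qed
  then have "\<bar>(f (y + 1 *\<^sub>R d) - 1 * (g y \<bullet> d)) - (f (y + 0 *\<^sub>R d) - 0 * (g y \<bullet> d))\<bar>
      \<le> L * (norm d)\<^sup>2 / 2"
    by (intro DERIV_linear_bound_imp_abs_diff_le[OF path_deriv])
  then show ?thesis by (simp add: d_def algebra_simps)
qed

lemma convex_DF_mult_image: "convex (DF_mult m g y ` unit_simplex m)"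
proof (rule convexI)
  fix u w :: real and a b
  assume "a \<in> DF_mult m g y ` unit_simplex m" "b \<in> DF_mult m g y ` unit_simplex m"
    and uw: "0 \<le> u" "0 \<le> w" "u + w = 1"
  then obtain mu nu where simplex: "mu \<in> unit_simplex m" "nu \<in> unit_simplex m"
    and ab: "a = DF_mult m g y mu" "b = DF_mult m g y nu" by auto
  have "(\<lambda>i. u * mu i + w * nu i) \<in> unit_simplex m"
    using uw simplex by (simp add: unit_simplex_def sum.distrib flip: sum_distrib_left)
  moreover have "u *\<^sub>R a + w *\<^sub>R b = DF_mult m g y (\<lambda>i. u * mu i + w * nu i)"
    unfolding ab DF_mult_def by (simp add: scaleR_sum_right scaleR_add_left sum.distrib)
  ultimately show "u *\<^sub>R a + w *\<^sub>R b \<in> DF_mult m g y ` unit_simplex m"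
    by blast
qed

lemma grad_hull_eq_DF_mult_image:
  fixes g :: "nat \<Rightarrow> 'a \<Rightarrow> 'a::real_vector"
  shows "grad_hull m g y = DF_mult m g y ` unit_simplex m"
proof
  show "DF_mult m g y ` unit_simplex m \<subseteq> grad_hull m g y"
    unfolding DF_mult_def grad_hull_def unit_simplex_def
    by clarify (intro convex_sum; auto intro: hull_inc)
  have "g j y \<in> DF_mult m g y ` unit_simplex m" if "j < m" for j
  proof -
    have "(\<lambda>i. if i = j then 1 else 0) \<in> unit_simplex m"
      using that by (simp add: unit_simplex_def)
    moreover have "g j y = DF_mult m g y (\<lambda>i. if i = j then 1 else 0)"
      unfolding DF_mult_def using that by (simp add: if_distrib[of "\<lambda>c. c *\<^sub>R g _ y"] cong: if_cong)
    ultimately show ?thesis by blast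
  qed
  then show "grad_hull m g y \<subseteq> DF_mult m g y ` unit_simplex m"
    unfolding grad_hull_def by (intro hull_minimal convex_DF_mult_image) auto
qed

lemma unit_simplex_weighted_sum_abs_le:
  assumes "lam \<in> unit_simplex m" and "\<And>j. j < m \<Longrightarrow> \<bar>r j\<bar> \<le> B"
  shows "\<bar>\<Sum>j<m. lam j * r j\<bar> \<le> B"
proof -
  have "\<bar>\<Sum>j<m. lam j * r j\<bar> \<le> (\<Sum>j<m. lam j * B)"
    using assms by (auto simp: unit_simplex_def abs_mult intro!: order.trans[OF sum_abs] sum_mono mult_left_mono)
  also have "\<dots> = B"
    using assms(1) by (simp add: unit_simplex_def sum_distrib_right[symmetric])
  finally show ?thesis .
qed

lemma closest_point_norm_sq_le:
  fixes S :: "'a::euclidean_space set"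
  assumes "convex S" "closed S" "v \<in> S"
  shows "(norm (v - closest_point S a))\<^sup>2 \<le> (norm (v - a))\<^sup>2 - (norm (closest_point S a - a))\<^sup>2"
proof -
  let ?p = "closest_point S a"
  have "(norm (v - a))\<^sup>2 = (norm (v - ?p))\<^sup>2 + (norm (?p - a))\<^sup>2 - 2 * ((a - ?p) \<bullet> (v - ?p))"
    unfolding power2_norm_eq_inner
    by (simp add: inner_diff_left inner_diff_right inner_commute algebra_simps)
  with closest_point_dot[OF assms] show ?thesis by simp
qed

lemma power2_norm_add_scaleR:
  fixes w d :: "'a::real_inner"
  shows "(norm (w + c *\<^sub>R d))\<^sup>2 = (norm w)\<^sup>2 + 2 * c * (w \<bullet> d) + c\<^sup>2 * (norm d)\<^sup>2"
  unfolding power2_norm_eq_inner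
  by (simp add: inner_add_left inner_add_right inner_commute power2_eq_square)

lemma subobj_eq_shifted_norm:
  fixes g :: "nat \<Rightarrow> 'a \<Rightarrow> 'a::real_inner"
  assumes "tau \<noteq> 0"
  shows "subobj m f g tau x y lam
    = tau / 2 * (norm (DF_mult m g y lam - (1 / tau) *\<^sub>R (y - x)))\<^sup>2 - (norm (x - y))\<^sup>2 / (2 * tau)
      + (\<Sum>j<m. lam j * (f j x - f j y - g j y \<bullet> (x - y)))"
proof -
  let ?v = "DF_mult m g y lam"
  have shift: "?v - (1 / tau) *\<^sub>R (y - x) = ?v + (1 / tau) *\<^sub>R (x - y)"
    by (simp add: scaleR_diff_right)
  have "tau / 2 * (norm (?v - (1 / tau) *\<^sub>R (y - x)))\<^sup>2
      = tau / 2 * (norm ?v)\<^sup>2 + ?v \<bullet> (x - y) + (norm (x - y))\<^sup>2 / (2 * tau)"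
    unfolding shift power2_norm_add_scaleR using assms by (simp add: power2_eq_square field_simps)
  moreover have "(\<Sum>j<m. lam j * (f j x - f j y - g j y \<bullet> (x - y)))
      = (\<Sum>j<m. lam j * (f j x - f j y)) - ?v \<bullet> (x - y)"
    by (simp add: DF_mult_def inner_sum_left sum_subtractf right_diff_distrib)
  ultimately show ?thesis
    unfolding subobj_def by linarith
qed

lemma closed_grad_hull:
  fixes g :: "nat \<Rightarrow> 'a \<Rightarrow> 'a::real_normed_vector"
  shows "closed (grad_hull m g y)"
  unfolding grad_hull_def by (simp add: compact_imp_closed finite_imp_compact_convex_hull)

lemma subproblem_minimizer_near_closest_point:
  fixes g :: "nat \<Rightarrow> 'a \<Rightarrow> 'a::euclidean_space"
  assumes "m \<ge> 1" and tau_pos: "tau > 0"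
    and lam_simplex: "lam \<in> unit_simplex m"
    and lam_min: "\<And>mu. mu \<in> unit_simplex m \<Longrightarrow> subobj m f g tau x y lam \<le> subobj m f g tau x y mu"
    and residual: "\<And>j. j < m \<Longrightarrow> \<bar>f j x - f j y - g j y \<bullet> (x - y)\<bar> \<le> B"
  shows "tau / 2 * (norm (DF_mult m g y lam - closest_point (grad_hull m g y) ((1 / tau) *\<^sub>R (y - x))))\<^sup>2
    \<le> 2 * B"
proof -
  define a where "a = (1 / tau) *\<^sub>R (y - x)"
  define R where "R j = f j x - f j y - g j y \<bullet> (x - y)" for j
  let ?C = "grad_hull m g y"
  let ?v = "DF_mult m g y lam"
  let ?p = "closest_point ?C a"
  have R_sum_bound: "\<bar>\<Sum>j<m. nu j * R j\<bar> \<le> B" if "nu \<in> unit_simplex m" for nu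
    using that residual unfolding R_def by (rule unit_simplex_weighted_sum_abs_le)
  have "?C \<noteq> {}"
    unfolding grad_hull_def using \<open>m \<ge> 1\<close> by (auto simp: lessThan_empty_iff)
  then obtain mu where mu: "mu \<in> unit_simplex m" "?p = DF_mult m g y mu"
    using closest_point_in_set[OF closed_grad_hull] grad_hull_eq_DF_mult_image by (metis imageE)
  have "tau / 2 * (norm (?v - a))\<^sup>2 + (\<Sum>j<m. lam j * R j)
      \<le> tau / 2 * (norm (?p - a))\<^sup>2 + (\<Sum>j<m. mu j * R j)"
    using lam_min[OF mu(1)] subobj_eq_shifted_norm[of tau m f g x y, folded a_def] tau_pos
    unfolding mu(2) R_def by simp
  then have "tau / 2 * (norm (?v - a))\<^sup>2 \<le> tau / 2 * (norm (?p - a))\<^sup>2 + 2 * B"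
    using R_sum_bound[OF lam_simplex] R_sum_bound[OF mu(1)] unfolding abs_le_iff by linarith
  moreover have "?v \<in> ?C"
    using lam_simplex by (simp add: grad_hull_eq_DF_mult_image)
  then have "tau / 2 * (norm (?v - ?p))\<^sup>2 \<le> tau / 2 * ((norm (?v - a))\<^sup>2 - (norm (?p - a))\<^sup>2)"
    using tau_pos closest_point_norm_sq_le[OF _ closed_grad_hull] unfolding grad_hull_def
    by (intro mult_left_mono) auto
  ultimately show ?thesis
    by (simp add: a_def right_diff_distrib)
qed

theorem mainTheorem3:
  fixes m :: nat
    and f :: "nat \<Rightarrow> real ^ 'n \<Rightarrow> real"
    and g :: "nat \<Rightarrow> real ^ 'n \<Rightarrow> real ^ 'n"
    and Lj :: "nat \<Rightarrow> real"
    and tau :: real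
    and x y :: "real ^ 'n"
    and lam :: "nat \<Rightarrow> real"
  assumes m_pos: "m \<ge> 1"
    and grad: "\<And>j z. j < m \<Longrightarrow> (f j has_derivative (\<lambda>h. g j z \<bullet> h)) (at z)"
    and grad_cont: "\<And>j. j < m \<Longrightarrow> continuous_on UNIV (g j)"
    and lip: "\<And>j. j < m \<Longrightarrow> (Lj j)-lipschitz_on UNIV (g j)"
    and tau_pos: "tau > 0"
    and lam_simplex: "lam \<in> unit_simplex m"
    and lam_min: "\<And>mu. mu \<in> unit_simplex m \<Longrightarrow> subobj m f g tau x y lam \<le> subobj m f g tau x y mu"
  shows "norm (DF_mult m g y lam - closest_point (grad_hull m g y) ((1 / tau) *\<^sub>R (y - x)))
           \<le> sqrt (2 * Max (Lj ` {..<m}) / tau) * norm (x - y)"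
proof -
  define L where "L = Max (Lj ` {..<m})"
  have residual: "\<bar>f j x - f j y - g j y \<bullet> (x - y)\<bar> \<le> L / 2 * (norm (x - y))\<^sup>2"
    if "j < m" for j
  proof -
    have "\<bar>f j x - f j y - g j y \<bullet> (x - y)\<bar> \<le> Lj j / 2 * (norm (x - y))\<^sup>2"
      by (rule lipschitz_gradient_taylor_bound[OF grad[OF that] lip[OF that]])
    also have "\<dots> \<le> L / 2 * (norm (x - y))\<^sup>2"
      unfolding L_def using that by (intro mult_right_mono divide_right_mono Max_ge) auto
    finally show ?thesis .
  qed
  have "tau / 2 * (norm (DF_mult m g y lam - closest_point (grad_hull m g y) ((1 / tau) *\<^sub>R (y - x))))\<^sup>2
      \<le> 2 * (L / 2 * (norm (x - y))\<^sup>2)"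
    by (rule subproblem_minimizer_near_closest_point[OF m_pos tau_pos lam_simplex lam_min residual])
  then have "(norm (DF_mult m g y lam - closest_point (grad_hull m g y) ((1 / tau) *\<^sub>R (y - x))))\<^sup>2
      \<le> 2 * L / tau * (norm (x - y))\<^sup>2"
    using tau_pos by (simp add: field_simps)
  then have "norm (DF_mult m g y lam - closest_point (grad_hull m g y) ((1 / tau) *\<^sub>R (y - x)))
      \<le> sqrt (2 * L / tau * (norm (x - y))\<^sup>2)"
    by (rule real_le_rsqrt)
  also have "\<dots> = sqrt (2 * L / tau) * norm (x - y)"
    by (simp only: real_sqrt_mult real_sqrt_abs abs_norm_cancel)
  finally show ?thesis
    unfolding L_def .
qed

end
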